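(* For every tree metric and every $\alpha>0$, the greedy-routing network creation game with edge price $\alpha$ is weakly acyclic under best responses: from every strategy profile there is a finite sequence of profiles, each obtained from the previous one by a single agent switching to a best response, that ends in a Nash equilibrium.
   Context: A tree metric on a finite set $\mathcal{P}$ is given by a spanning tree $T$ on $\mathcal{P}$ with positive edge weights, $d(x,y)=d_T(x,y)$ being the weight of the unique $x$–$y$ path in $T$. Game: agents are the points of $\mathcal{P}$; agent $u$'s strategy is $S_u\subseteq\mathcal{P}\setminus\{u\}$; a profile $\mathbf{s}$ defines the directed network with arcs $(u,v)$, $v\in S_u$, of length $d(u,v)$. A greedy path from $u$ to $v$ is a directed path $u=x_1,\dots,x_j=v$ of arcs with $d(x_i,v)>d(x_{i+1},v)$ for all $i$. $\mathrm{stretch}(u,v)$ is the minimum length of a greedy path from $u$ to $v$ divided by $d(u,v)$, or a fixed sufficiently large penalty constant $Z$ if none exists. Cost: $c_u(\mathbf{s})=\sum_{v\ne u}\mathrm{stretch}(u,v)+\alpha|S_u|$. A best response of $u$ to $\mathbf{s}$ is a strategy minimizing $c_u(\cdot,\mathbf{s}_{-u})$; a Nash equilibrium is a profile where every agent plays a best response. *)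

theory Defs
  imports Complex_Main
begin

definition edges_on :: "'a set \<Rightarrow> 'a set set \<Rightarrow> bool" where
  "edges_on P E \<longleftrightarrow> (\<forall>e\<in>E. \<exists>x y. x \<in> P \<and> y \<in> P \<and> x \<noteq> y \<and> e = {x, y})"

definition tpath :: "'a set \<Rightarrow> 'a set set \<Rightarrow> 'a \<Rightarrow> 'a \<Rightarrow> 'a list \<Rightarrow> bool" where
  "tpath P E x y xs \<longleftrightarrow> xs \<noteq> [] \<and> hd xs = x \<and> last xs = y \<and> distinct xs \<and> set xs \<subseteq> P \<and>
     (\<forall>i < length xs - 1. {xs ! i, xs ! Suc i} \<in> E)"

definition tcycle :: "'a set \<Rightarrow> 'a set set \<Rightarrow> 'a list \<Rightarrow> bool" where
  "tcycle P E xs \<longleftrightarrow> length xs \<ge> 3 \<and> distinct xs \<and> set xs \<subseteq> P \<and>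
     (\<forall>i < length xs - 1. {xs ! i, xs ! Suc i} \<in> E) \<and> {last xs, hd xs} \<in> E"

definition connected_graph :: "'a set \<Rightarrow> 'a set set \<Rightarrow> bool" where
  "connected_graph P E \<longleftrightarrow> (\<forall>x\<in>P. \<forall>y\<in>P. \<exists>xs. tpath P E x y xs)"

definition spanning_tree :: "'a set \<Rightarrow> 'a set set \<Rightarrow> bool" where
  "spanning_tree P E \<longleftrightarrow> edges_on P E \<and> connected_graph P E \<and> (\<nexists>xs. tcycle P E xs)"

definition path_weight :: "('a set \<Rightarrow> real) \<Rightarrow> 'a list \<Rightarrow> real" where
  "path_weight w xs = (\<Sum>i < length xs - 1. w {xs ! i, xs ! Suc i})"

text \<open>The tree metric: weight of the (unique) x--y path in T.\<close>
definition tree_dist :: "'a set \<Rightarrow> 'a set set \<Rightarrow> ('a set \<Rightarrow> real) \<Rightarrow> 'a \<Rightarrow> 'a \<Rightarrow> real" where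
  "tree_dist P E w x y = (THE r. \<exists>xs. tpath P E x y xs \<and> r = path_weight w xs)"

definition valid_profile :: "'a set \<Rightarrow> ('a \<Rightarrow> 'a set) \<Rightarrow> bool" where
  "valid_profile P s \<longleftrightarrow> (\<forall>u. (u \<in> P \<longrightarrow> s u \<subseteq> P - {u}) \<and> (u \<notin> P \<longrightarrow> s u = {}))"

definition greedy_path :: "('a \<Rightarrow> 'a \<Rightarrow> real) \<Rightarrow> ('a \<Rightarrow> 'a set) \<Rightarrow> 'a \<Rightarrow> 'a \<Rightarrow> 'a list \<Rightarrow> bool" where
  "greedy_path d s u v xs \<longleftrightarrow> xs \<noteq> [] \<and> hd xs = u \<and> last xs = v \<and>
     (\<forall>i < length xs - 1. xs ! Suc i \<in> s (xs ! i) \<and> d (xs ! Suc i) v < d (xs ! i) v)"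

definition greedy_len :: "('a \<Rightarrow> 'a \<Rightarrow> real) \<Rightarrow> 'a list \<Rightarrow> real" where
  "greedy_len d xs = (\<Sum>i < length xs - 1. d (xs ! i) (xs ! Suc i))"

definition stretch :: "('a \<Rightarrow> 'a \<Rightarrow> real) \<Rightarrow> real \<Rightarrow> ('a \<Rightarrow> 'a set) \<Rightarrow> 'a \<Rightarrow> 'a \<Rightarrow> real" where
  "stretch d Z s u v =
     (if \<exists>xs. greedy_path d s u v xs
      then Min {greedy_len d xs | xs. greedy_path d s u v xs} / d u v
      else Z)"

definition cost :: "'a set \<Rightarrow> ('a \<Rightarrow> 'a \<Rightarrow> real) \<Rightarrow> real \<Rightarrow> real \<Rightarrow> ('a \<Rightarrow> 'a set) \<Rightarrow> 'a \<Rightarrow> real" where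
  "cost P d \<alpha> Z s u = (\<Sum>v \<in> P - {u}. stretch d Z s u v) + \<alpha> * real (card (s u))"

definition best_response :: "'a set \<Rightarrow> ('a \<Rightarrow> 'a \<Rightarrow> real) \<Rightarrow> real \<Rightarrow> real \<Rightarrow> ('a \<Rightarrow> 'a set) \<Rightarrow> 'a \<Rightarrow> 'a set \<Rightarrow> bool" where
  "best_response P d \<alpha> Z s u S \<longleftrightarrow> S \<subseteq> P - {u} \<and>
     (\<forall>S'. S' \<subseteq> P - {u} \<longrightarrow> cost P d \<alpha> Z (s(u := S)) u \<le> cost P d \<alpha> Z (s(u := S')) u)"

definition nash_equilibrium :: "'a set \<Rightarrow> ('a \<Rightarrow> 'a \<Rightarrow> real) \<Rightarrow> real \<Rightarrow> real \<Rightarrow> ('a \<Rightarrow> 'a set) \<Rightarrow> bool" where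
  "nash_equilibrium P d \<alpha> Z s \<longleftrightarrow> valid_profile P s \<and> (\<forall>u\<in>P. best_response P d \<alpha> Z s u (s u))"

definition br_step :: "'a set \<Rightarrow> ('a \<Rightarrow> 'a \<Rightarrow> real) \<Rightarrow> real \<Rightarrow> real \<Rightarrow> ('a \<Rightarrow> 'a set) \<Rightarrow> ('a \<Rightarrow> 'a set) \<Rightarrow> bool" where
  "br_step P d \<alpha> Z s s' \<longleftrightarrow> (\<exists>u\<in>P. \<exists>S. best_response P d \<alpha> Z s u S \<and> s' = s(u := S))"

definition weakly_acyclic_br :: "'a set \<Rightarrow> ('a \<Rightarrow> 'a \<Rightarrow> real) \<Rightarrow> real \<Rightarrow> real \<Rightarrow> bool" where
  "weakly_acyclic_br P d \<alpha> Z \<longleftrightarrow>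
     (\<forall>s. valid_profile P s \<longrightarrow>
        (\<exists>ss. ss \<noteq> [] \<and> hd ss = s \<and>
              (\<forall>i < length ss - 1. br_step P d \<alpha> Z (ss ! i) (ss ! Suc i)) \<and>
              nash_equilibrium P d \<alpha> Z (last ss)))"

end

theory Submission
  imports Defs
begin

text \<open>Root the tree at a point r. The branch of an agent u behind a tree neighbour n consists of the
  points whose tree path from u leaves through n. If every point of this branch is reached from n
  along its tree path in the network, any best response of u buys exactly the link to n inside the
  branch: that link gives stretch 1 to the whole branch at price \<alpha>, whereas buying nothing there
  costs the penalty Z > 1 + \<alpha> for reaching n, buying a single other point gives n stretch > 1, and
  buying two points costs 2\<alpha>.
  Let the agents best-respond once in order of decreasing distance from r: each then links to all
  its children. Let them best-respond again in order of increasing distance: each then buys exactly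
  its tree neighbours. In the resulting profile every agent owns the links to all its tree
  neighbours, and by the same argument this is a Nash equilibrium.\<close>

fun chain_sum :: "('a \<Rightarrow> 'a \<Rightarrow> 'b::comm_monoid_add) \<Rightarrow> 'a list \<Rightarrow> 'b" where
  "chain_sum f (a # b # xs) = f a b + chain_sum f (b # xs)"
| "chain_sum f _ = 0"

lemma chain_sum_conv_nth: "chain_sum f xs = (\<Sum>i < length xs - 1. f (xs ! i) (xs ! Suc i))"
proof (induction f xs rule: chain_sum.induct)
  case (1 f a b xs)
  then show ?case
    by (simp del: sum.lessThan_Suc add: sum.lessThan_Suc_shift)
qed auto

lemma chain_sum_append: "chain_sum f (xs @ y # ys) = chain_sum f (xs @ [y]) + chain_sum f (y # ys)"
proof (induction xs)
  case (Cons a xs)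
  then show ?case by (cases xs) (auto simp: add.assoc)
qed simp

lemma chain_sum_rev: "chain_sum f (rev xs) = chain_sum (\<lambda>a b. f b a) xs"
proof (induction f xs rule: chain_sum.induct)
  case (1 f a b xs)
  have "chain_sum f (rev (a # b # xs)) = chain_sum f (rev xs @ [b]) + f b a"
    using chain_sum_append[of f "rev xs" b "[a]"] by simp
  with 1 show ?case by (simp add: add.commute)
qed auto

lemma successively_append_Cons:
  "successively R (xs @ y # ys) \<longleftrightarrow> successively R (xs @ [y]) \<and> successively R (y # ys)"
  by (auto simp: successively_append_iff successively_Cons)

lemma sum_ge_term_plus_card:
  fixes g :: "'b \<Rightarrow> real"
  assumes "finite K" "n \<in> K" "\<And>v. v \<in> K \<Longrightarrow> 1 \<le> g v"
  shows "g n + (real (card K) - 1) \<le> sum g K"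
proof -
  have "real (card (K - {n})) \<le> sum g (K - {n})"
    using sum_mono[of "K - {n}" "\<lambda>_. 1" g] assms(3) by simp
  moreover have "card (K - {n}) = card K - 1" "card K \<ge> 1"
    using assms(1,2) by (auto simp: Suc_le_eq card_gt_0_iff)
  ultimately show ?thesis using sum.remove[OF assms(1,2), of g] by (simp add: of_nat_diff)
qed

lemma rtranclp_imp_chain:
  "R\<^sup>*\<^sup>* a b \<Longrightarrow> \<exists>ss. ss \<noteq> [] \<and> hd ss = a \<and> last ss = b \<and> (\<forall>i < length ss - 1. R (ss ! i) (ss ! Suc i))"
proof (induction rule: converse_rtranclp_induct)
  case base
  show ?case by (intro exI[of _ "[b]"]) simp
next
  case (step a a')
  then obtain ss where "ss \<noteq> []" "hd ss = a'" "last ss = b" "successively R ss"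
    by (auto simp: successively_conv_nth less_diff_conv)
  then have "a # ss \<noteq> [] \<and> hd (a # ss) = a \<and> last (a # ss) = b \<and> successively R (a # ss)"
    using step(1) by (simp add: successively_Cons)
  then show ?case by (auto simp: successively_conv_nth less_diff_conv)
qed

lemma mem_take_if_sorted_less:
  assumes "sorted (map f L)" "y \<in> set L" "k < length L" "f y < f (L ! k)"
  shows "y \<in> set (take k L)"
proof -
  obtain j where j: "j < length L" "L ! j = y" using assms(2) by (meson in_set_conv_nth)
  have "j < k"
  proof (rule ccontr)
    assume "\<not> j < k"
    then have "f (L ! k) \<le> f (L ! j)" using sorted_nth_mono[OF assms(1), of k j] j(1) by simp
    then show False using assms(4) j(2) by simp
  qed
  then show ?thesis using j by (metis in_set_conv_nth length_take min_less_iff_conj nth_take)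
qed

lemma tpath_iff: "tpath P E x y xs \<longleftrightarrow> xs \<noteq> [] \<and> hd xs = x \<and> last xs = y \<and> distinct xs
    \<and> set xs \<subseteq> P \<and> successively (\<lambda>a b. {a, b} \<in> E) xs"
  unfolding tpath_def successively_conv_nth by (auto simp: less_diff_conv)

lemma tcycle_iff: "tcycle P E xs \<longleftrightarrow> length xs \<ge> 3 \<and> distinct xs \<and> set xs \<subseteq> P
    \<and> successively (\<lambda>a b. {a, b} \<in> E) xs \<and> {last xs, hd xs} \<in> E"
  unfolding tcycle_def successively_conv_nth by (auto simp: less_diff_conv)

lemma path_weight_eq_chain_sum: "path_weight w xs = chain_sum (\<lambda>a b. w {a, b}) xs"
  unfolding path_weight_def chain_sum_conv_nth ..

lemma greedy_path_iff: "greedy_path d s u v xs \<longleftrightarrow> xs \<noteq> [] \<and> hd xs = u \<and> last xs = v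
    \<and> successively (\<lambda>a b. b \<in> s a \<and> d b v < d a v) xs"
  unfolding greedy_path_def successively_conv_nth by (auto simp: less_diff_conv)

lemma greedy_len_eq_chain_sum: "greedy_len d xs = chain_sum d xs"
  unfolding greedy_len_def chain_sum_conv_nth ..

lemma greedy_path_Cons_Cons:
  "greedy_path d s x v (x # y # ys) \<longleftrightarrow> y \<in> s x \<and> d y v < d x v \<and> greedy_path d s y v (y # ys)"
  by (auto simp: greedy_path_iff)

lemma greedy_path_single: "greedy_path d s x v [x] \<longleftrightarrow> x = v"
  by (auto simp: greedy_path_iff)

lemma greedy_path_ConsE:
  assumes "greedy_path d s x v xs"
  obtains ys where "xs = x # ys"
  using assms by (cases xs) (auto simp: greedy_path_iff)

lemma greedy_len_Cons_Cons: "greedy_len d (x # y # ys) = d x y + greedy_len d (y # ys)"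
  by (simp add: greedy_len_eq_chain_sum)

lemma greedy_len_single: "greedy_len d [x] = 0"
  by (simp add: greedy_len_eq_chain_sum)

lemma greedy_path_fun_upd:
  "u \<notin> set xs \<Longrightarrow> greedy_path d (s(u := A)) x v xs \<longleftrightarrow> greedy_path d s x v xs"
  unfolding greedy_path_iff by (intro conj_cong refl successively_cong) auto

lemma valid_profile_fun_upd:
  "valid_profile P s \<Longrightarrow> u \<in> P \<Longrightarrow> A \<subseteq> P - {u} \<Longrightarrow> valid_profile P (s(u := A))"
  unfolding valid_profile_def by auto

lemma greedy_path_props:
  assumes "greedy_path d s x v xs" "valid_profile P s" "x \<in> P"
  shows "set xs \<subseteq> P \<and> distinct xs \<and> (\<forall>y\<in>set xs. d y v \<le> d x v)"
  using assms
proof (induction xs arbitrary: x)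
  case (Cons x' xs)
  then have "x' = x" by (simp add: greedy_path_iff)
  show ?case
  proof (cases xs)
    case Nil
    then show ?thesis using \<open>x' = x\<close> Cons.prems by simp
  next
    case (Cons y ys)
    then have y: "y \<in> s x" "d y v < d x v" "greedy_path d s y v (y # ys)"
      using Cons.prems(1) \<open>x' = x\<close> greedy_path_Cons_Cons by metis+
    have "y \<in> P" using y(1) Cons.prems(2,3) unfolding valid_profile_def by blast
    then have "set (y # ys) \<subseteq> P \<and> distinct (y # ys) \<and> (\<forall>z\<in>set (y # ys). d z v \<le> d y v)"
      using Cons.IH y(3) Cons.prems(2) Cons by blast
    then show ?thesis using y(2) \<open>x' = x\<close> Cons Cons.prems(3) by force
  qed
qed (simp add: greedy_path_iff)

lemma finite_greedy_paths:
  assumes "finite P" "valid_profile P s" "u \<in> P"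
  shows "finite {xs. greedy_path d s u v xs}"
proof (rule finite_subset)
  show "{xs. greedy_path d s u v xs} \<subseteq> {xs. set xs \<subseteq> P \<and> length xs \<le> card P}"
  proof
    fix xs assume "xs \<in> {xs. greedy_path d s u v xs}"
    then have "set xs \<subseteq> P" "distinct xs" using greedy_path_props[OF _ assms(2,3)] by blast+
    then show "xs \<in> {xs. set xs \<subseteq> P \<and> length xs \<le> card P}"
      using card_mono[OF assms(1)] by (simp flip: distinct_card)
  qed
  show "finite {xs. set xs \<subseteq> P \<and> length xs \<le> card P}"
    using finite_lists_length_le[OF assms(1)] by blast
qed

lemma stretch_unreachable: "\<not> (\<exists>xs. greedy_path d s u v xs) \<Longrightarrow> stretch d Z s u v = Z"
  unfolding stretch_def by (rule if_not_P)

lemma stretch_attained: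
  assumes "finite P" "valid_profile P s" "u \<in> P" "greedy_path d s u v xs"
  obtains ys where "greedy_path d s u v ys" "stretch d Z s u v = greedy_len d ys / d u v"
    "\<And>zs. greedy_path d s u v zs \<Longrightarrow> greedy_len d ys \<le> greedy_len d zs"
proof -
  let ?L = "{greedy_len d xs | xs. greedy_path d s u v xs}"
  have "finite ?L" using finite_greedy_paths[OF assms(1-3)] by simp
  moreover have "?L \<noteq> {}" using assms(4) by blast
  ultimately have "Min ?L \<in> ?L" by (rule Min_in)
  then obtain ys where ys: "greedy_path d s u v ys" "Min ?L = greedy_len d ys" by auto
  show ?thesis
  proof (rule that[OF ys(1)])
    have "stretch d Z s u v = Min ?L / d u v"
      unfolding stretch_def by (rule if_P) (use assms(4) in blast)
    then show "stretch d Z s u v = greedy_len d ys / d u v" using ys(2) by simp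
    show "greedy_len d ys \<le> greedy_len d zs" if "greedy_path d s u v zs" for zs
    proof -
      have "greedy_len d zs \<in> ?L" using that by blast
      then have "Min ?L \<le> greedy_len d zs" by (rule Min_le[OF \<open>finite ?L\<close>])
      then show ?thesis using ys(2) by simp
    qed
  qed
qed

section \<open>Tree metrics\<close>

locale weighted_tree =
  fixes P :: "'a set" and E :: "'a set set" and w :: "'a set \<Rightarrow> real"
  assumes spanning: "spanning_tree P E" and weight_pos: "\<And>e. e \<in> E \<Longrightarrow> w e > 0"
begin

abbreviation tree_walk :: "'a list \<Rightarrow> bool" where
  "tree_walk \<equiv> successively (\<lambda>a b. {a, b} \<in> E)"

lemma edge_endpoints: "{a, b} \<in> E \<Longrightarrow> a \<in> P \<and> b \<in> P \<and> a \<noteq> b"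
  using spanning unfolding spanning_tree_def edges_on_def by (fastforce simp: doubleton_eq_iff)

lemma tree_walk_rev: "tree_walk (rev xs) \<longleftrightarrow> tree_walk xs"
  by (simp add: insert_commute)

text \<open>Two paths to y starting at distinct neighbours a, b of x and avoiding x close up into a cycle
  through x: follow the first path to its first vertex z on the second, then return along the second.\<close>
lemma paths_from_two_neighbours_absurd:
  assumes "tpath P E a y xs" "tpath P E b y ys" "a \<noteq> b" "x \<notin> set xs" "x \<notin> set ys"
    "{x, a} \<in> E" "{x, b} \<in> E" "x \<in> P"
  shows False
proof -
  have xs_props: "xs \<noteq> []" "hd xs = a" "last xs = y" "distinct xs" "set xs \<subseteq> P" "tree_walk xs"
    using assms(1) by (auto simp: tpath_iff)
  have ys_props: "ys \<noteq> []" "hd ys = b" "last ys = y" "distinct ys" "set ys \<subseteq> P" "tree_walk ys"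
    using assms(2) by (auto simp: tpath_iff)
  have "\<exists>z\<in>set ys. z \<in> set xs" using xs_props ys_props by (metis last_in_set)
  then obtain p z q where ys: "ys = p @ z # q" and "z \<in> set xs" and p_avoids: "\<forall>t\<in>set p. t \<notin> set xs"
    using split_list_first_prop[of ys "\<lambda>z. z \<in> set xs"] by blast
  then obtain p' q' where xs: "xs = p' @ z # q'" by (meson split_list)
  define c where "c = x # p' @ z # rev p"
  have "tree_walk (p' @ [z])" using xs_props(6) xs successively_append_Cons by metis
  moreover have "tree_walk (z # rev p)"
    using ys_props(6) ys successively_append_Cons tree_walk_rev[of "p @ [z]"] by (metis rev.simps(2) rev_rev_ident)
  ultimately have "tree_walk (p' @ z # rev p)" using successively_append_Cons by metis
  moreover have "hd (p' @ z # rev p) = a" using xs_props(2) xs by (cases p') auto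
  ultimately have "tree_walk c" unfolding c_def using assms(6) by (simp add: successively_Cons)
  moreover have "last c = b" using ys_props(2) ys unfolding c_def by (cases p) auto
  moreover have "length c \<ge> 3"
  proof (cases p)
    case Nil
    then have "p' \<noteq> []" using xs ys xs_props(2) ys_props(2) assms(3) by auto
    then show ?thesis unfolding c_def by (cases p') auto
  qed (simp add: c_def)
  moreover have "distinct c" unfolding c_def using xs_props(4) ys_props(4) xs ys p_avoids assms(4,5) by auto
  moreover have "set c \<subseteq> P" unfolding c_def using xs_props(5) ys_props(5) xs ys assms(8) by auto
  ultimately have "tcycle P E c" using assms(7) by (simp add: tcycle_iff c_def insert_commute)
  then show False using spanning unfolding spanning_tree_def by blast
qed

lemma tpath_unique: "tpath P E x y xs \<Longrightarrow> tpath P E x y ys \<Longrightarrow> xs = ys"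
proof (induction xs arbitrary: x ys)
  case Nil
  then show ?case by (simp add: tpath_iff)
next
  case (Cons x0 xs)
  have x0: "x0 = x" using Cons.prems by (simp add: tpath_iff)
  obtain ys' where ys: "ys = x # ys'" using Cons.prems(2) by (cases ys) (auto simp: tpath_iff)
  show ?case
  proof (cases xs)
    case Nil
    then have "ys' = []" using Cons.prems x0 ys last_in_set by (fastforce simp: tpath_iff split: if_splits)
    then show ?thesis using Nil x0 ys by simp
  next
    case (Cons a xs')
    have "ys' \<noteq> []" using Cons.prems x0 ys Cons last_in_set by (fastforce simp: tpath_iff)
    then obtain b ys'' where ys': "ys' = b # ys''" by (cases ys') auto
    have path_a: "tpath P E a y xs" using Cons.prems(1) Cons x0 by (auto simp: tpath_iff)
    have path_b: "tpath P E b y ys'" using Cons.prems(2) ys ys' by (auto simp: tpath_iff)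
    show ?thesis
    proof (cases "a = b")
      case True
      then show ?thesis using Cons.IH[OF path_a] path_b x0 ys by simp
    next
      case False
      have "x \<notin> set xs" "{x, a} \<in> E" "x \<in> P" using Cons.prems(1) Cons x0 by (auto simp: tpath_iff)
      moreover have "x \<notin> set ys'" "{x, b} \<in> E" using Cons.prems(2) ys ys' by (auto simp: tpath_iff)
      ultimately show ?thesis using paths_from_two_neighbours_absurd[OF path_a path_b False] by blast
    qed
  qed
qed

definition tree_path :: "'a \<Rightarrow> 'a \<Rightarrow> 'a list" where
  "tree_path x y = (THE xs. tpath P E x y xs)"

definition next_hop :: "'a \<Rightarrow> 'a \<Rightarrow> 'a" where
  "next_hop x y = hd (tl (tree_path x y))"

abbreviation tdist :: "'a \<Rightarrow> 'a \<Rightarrow> real" where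
  "tdist \<equiv> tree_dist P E w"

lemma tpath_tree_path: "x \<in> P \<Longrightarrow> y \<in> P \<Longrightarrow> tpath P E x y (tree_path x y)"
  using spanning tpath_unique unfolding spanning_tree_def connected_graph_def tree_path_def
  by (metis theI')

lemma tree_path_eqI: "tpath P E x y xs \<Longrightarrow> tree_path x y = xs"
  by (metis tpath_iff tpath_tree_path tpath_unique hd_in_set last_in_set subsetD)

lemma tree_path_props:
  assumes "x \<in> P" "y \<in> P"
  shows "tree_path x y \<noteq> []" "hd (tree_path x y) = x" "last (tree_path x y) = y"
    "distinct (tree_path x y)" "set (tree_path x y) \<subseteq> P" "tree_walk (tree_path x y)"
  using tpath_tree_path[OF assms] by (auto simp: tpath_iff)

lemma tdist_eq: "x \<in> P \<Longrightarrow> y \<in> P \<Longrightarrow> tdist x y = chain_sum (\<lambda>a b. w {a, b}) (tree_path x y)"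
  unfolding tree_dist_def
  by (rule the_equality) (auto simp: path_weight_eq_chain_sum tree_path_eqI intro: tpath_tree_path)

lemma tree_path_self: "x \<in> P \<Longrightarrow> tree_path x x = [x]"
  by (rule tree_path_eqI) (simp add: tpath_iff)

lemma tdist_self: "x \<in> P \<Longrightarrow> tdist x x = 0"
  by (simp add: tdist_eq tree_path_self)

lemma tree_path_next_hop:
  assumes "x \<in> P" "y \<in> P" "x \<noteq> y"
  shows "tree_path x y = x # tree_path (next_hop x y) y" "{x, next_hop x y} \<in> E" "next_hop x y \<in> P"
proof -
  obtain t where t: "tree_path x y = x # t"
    using tree_path_props(1,2)[OF assms(1,2)] by (cases "tree_path x y") auto
  then obtain a t' where t': "t = a # t'"
    using tree_path_props(3)[OF assms(1,2)] assms(3) by (cases t) auto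
  have a: "next_hop x y = a" unfolding next_hop_def using t t' by simp
  have "tpath P E a y t" using tpath_tree_path[OF assms(1,2)] t t' by (auto simp: tpath_iff)
  then show "tree_path x y = x # tree_path (next_hop x y) y" using tree_path_eqI t a by simp
  show "{x, next_hop x y} \<in> E" "next_hop x y \<in> P"
    using tpath_tree_path[OF assms(1,2)] t t' a by (auto simp: tpath_iff)
qed

lemma tree_path_edge: "{x, y} \<in> E \<Longrightarrow> tree_path x y = [x, y]"
  by (rule tree_path_eqI) (use edge_endpoints[of x y] in \<open>auto simp: tpath_iff\<close>)

lemma next_hop_edge: "{x, y} \<in> E \<Longrightarrow> next_hop x y = y"
  by (simp add: next_hop_def tree_path_edge)

lemma tdist_edge: "{x, y} \<in> E \<Longrightarrow> tdist x y = w {x, y}"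
  using edge_endpoints[of x y] by (simp add: tdist_eq tree_path_edge)

lemma tdist_nonneg: "x \<in> P \<Longrightarrow> y \<in> P \<Longrightarrow> tdist x y \<ge> 0"
proof -
  have "tree_walk xs \<Longrightarrow> chain_sum (\<lambda>a b. w {a, b}) xs \<ge> 0" for xs
    by (induction "\<lambda>a b. w {a, b}" xs rule: chain_sum.induct)
      (auto intro: add_nonneg_nonneg less_imp_le weight_pos)
  then show "x \<in> P \<Longrightarrow> y \<in> P \<Longrightarrow> tdist x y \<ge> 0" by (simp add: tdist_eq tree_path_props(6))
qed

lemma tdist_next_hop:
  assumes "x \<in> P" "y \<in> P" "x \<noteq> y"
  shows "tdist x y = tdist x (next_hop x y) + tdist (next_hop x y) y"
proof -
  note hop = tree_path_next_hop[OF assms]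
  obtain t where t: "tree_path (next_hop x y) y = next_hop x y # t"
    using tree_path_props(1,2)[OF hop(3) assms(2)] by (cases "tree_path (next_hop x y) y") auto
  show ?thesis
    using hop t tdist_edge[OF hop(2)] by (simp add: tdist_eq assms)
qed

lemma tdist_pos: assumes "x \<in> P" "y \<in> P" "x \<noteq> y" shows "tdist x y > 0"
proof -
  note hop = tree_path_next_hop[OF assms]
  have "tdist x (next_hop x y) > 0" using tdist_edge[OF hop(2)] weight_pos[OF hop(2)] by simp
  then show ?thesis using tdist_next_hop[OF assms] tdist_nonneg[OF hop(3) assms(2)] by simp
qed

lemma tree_path_sym: "x \<in> P \<Longrightarrow> y \<in> P \<Longrightarrow> tree_path y x = rev (tree_path x y)"
  using tree_path_props[of x y] tree_walk_rev[of "tree_path x y"]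
  by (intro tree_path_eqI) (simp add: tpath_iff hd_rev last_rev del: successively_rev)

lemma tdist_sym: assumes "x \<in> P" "y \<in> P" shows "tdist x y = tdist y x"
proof -
  have "chain_sum (\<lambda>a b. w {a, b}) (rev xs) = chain_sum (\<lambda>a b. w {a, b}) xs" for xs
    by (simp add: chain_sum_rev insert_commute)
  then show ?thesis using assms tree_path_sym[OF assms] by (simp add: tdist_eq)
qed

lemma tree_path_split:
  assumes "x \<in> P" "v \<in> P" "y \<in> set (tree_path x v)"
  shows "\<exists>p q. tree_path x v = p @ y # q \<and> tree_path x y = p @ [y] \<and> tree_path y v = y # q"
proof -
  obtain p q where pq: "tree_path x v = p @ y # q" using assms(3) by (meson split_list)
  note props = tree_path_props[OF assms(1,2)]
  have "tree_walk (p @ [y])" "tree_walk (y # q)"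
    using props(6) pq successively_append_Cons[of _ p y q] by simp_all
  moreover have "hd (p @ [y]) = x" using props(2) pq by (cases p) auto
  moreover have "last (y # q) = v" using props(3) pq by (cases q) auto
  ultimately have "tpath P E x y (p @ [y])" "tpath P E y v (y # q)"
    using props(4,5) pq by (auto simp: tpath_iff)
  then show ?thesis using pq tree_path_eqI by blast
qed

lemma tdist_split:
  assumes "x \<in> P" "v \<in> P" "y \<in> set (tree_path x v)"
  shows "tdist x v = tdist x y + tdist y v"
proof -
  have "y \<in> P" using tree_path_props(5)[OF assms(1,2)] assms(3) by auto
  moreover obtain p q where "tree_path x v = p @ y # q" "tree_path x y = p @ [y]" "tree_path y v = y # q"
    using tree_path_split[OF assms] by blast
  ultimately show ?thesis using assms(1,2) chain_sum_append[of _ p y q] by (simp add: tdist_eq)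
qed

lemma tdist_triangle_edge:
  assumes "{x, x'} \<in> E" "z \<in> P"
  shows "tdist x z \<le> w {x, x'} + tdist x' z"
proof -
  have x: "x \<in> P" "x' \<in> P" "x \<noteq> x'" using edge_endpoints assms(1) by auto
  show ?thesis
  proof (cases "x \<in> set (tree_path x' z)")
    case True
    then show ?thesis
      using tdist_split[OF x(2) assms(2) True] tdist_nonneg[OF x(2,1)] weight_pos[OF assms(1)] by simp
  next
    case False
    then have "tpath P E x z (x # tree_path x' z)"
      using tree_path_props[OF x(2) assms(2)] x assms(1) by (auto simp: tpath_iff successively_Cons)
    then have "tree_path x z = x # tree_path x' z" by (rule tree_path_eqI)
    moreover obtain t where "tree_path x' z = x' # t"
      using tree_path_props(1,2)[OF x(2) assms(2)] by (cases "tree_path x' z") auto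
    ultimately show ?thesis using x assms(2) by (simp add: tdist_eq)
  qed
qed

lemma tdist_triangle:
  assumes "x \<in> P" "y \<in> P" "z \<in> P"
  shows "tdist x z \<le> tdist x y + tdist y z"
  using assms
proof (induction "length (tree_path x y)" arbitrary: x rule: less_induct)
  case less
  show ?case
  proof (cases "x = y")
    case True
    then show ?thesis using tdist_self less.prems by simp
  next
    case False
    let ?n = "next_hop x y"
    note hop = tree_path_next_hop[OF less.prems(1,2) False]
    have "tdist ?n z \<le> tdist ?n y + tdist y z" using less hop by simp
    then show ?thesis
      using tdist_triangle_edge[OF hop(2) less.prems(3)] tdist_edge[OF hop(2)]
        tdist_next_hop[OF less.prems(1,2) False] by simp
  qed
qed

text \<open>The tree paths from u to x and to v then meet only in u, so together they form the tree
  path from x to v.\<close>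
lemma tdist_through:
  assumes "u \<in> P" "x \<in> P" "v \<in> P" "x \<noteq> u" "v \<noteq> u" "next_hop u x \<noteq> next_hop u v"
  shows "tdist x v = tdist x u + tdist u v"
proof -
  define a where "a = tree_path (next_hop u x) x"
  define b where "b = tree_path (next_hop u v) v"
  have A: "tree_path u x = u # a" and B: "tree_path u v = u # b"
    using tree_path_next_hop assms unfolding a_def b_def by metis+
  have hops: "next_hop u x \<in> P" "next_hop u v \<in> P" using tree_path_next_hop assms by metis+
  have meet_at_u: "z = u" if z: "z \<in> set (tree_path u x)" "z \<in> set (tree_path u v)" for z
  proof (rule ccontr)
    assume "z \<noteq> u"
    have "z \<in> P" using z tree_path_props(5)[OF assms(1,2)] by auto
    obtain q1 where 1: "tree_path u x = tree_path u z @ q1"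
      using tree_path_split[OF assms(1,2) z(1)] by fastforce
    obtain q2 where 2: "tree_path u v = tree_path u z @ q2"
      using tree_path_split[OF assms(1,3) z(2)] by fastforce
    note hop = tree_path_next_hop[OF assms(1) \<open>z \<in> P\<close> \<open>z \<noteq> u\<close>[symmetric]]
    obtain t where "tree_path (next_hop u z) z = next_hop u z # t"
      using tree_path_props(1,2)[OF hop(3) \<open>z \<in> P\<close>] by (cases "tree_path (next_hop u z) z") auto
    then have uz: "tree_path u z = u # next_hop u z # t" using hop(1) by simp
    have "next_hop u x = next_hop u z" "next_hop u v = next_hop u z"
      unfolding next_hop_def[of u x] next_hop_def[of u v] 1 2 uz by simp_all
    then show False using assms(6) by simp
  qed
  have a_props: "a \<noteq> []" "last a = x" "distinct a" "set a \<subseteq> P" "u \<notin> set a"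
    using tree_path_props[OF hops(1) assms(2)] tree_path_props(4)[OF assms(1,2)] A a_def by auto
  have b_props: "b \<noteq> []" "last b = v" "distinct b" "set b \<subseteq> P" "u \<notin> set b"
    using tree_path_props[OF hops(2) assms(3)] tree_path_props(4)[OF assms(1,3)] B b_def by auto
  have "set a \<inter> set b = {}" using meet_at_u A B a_props(5) by auto
  moreover have "tree_walk (rev a @ [u])" "tree_walk (u # b)"
    using tree_path_props(6)[OF assms(1,2)] tree_path_props(6)[OF assms(1,3)] A B tree_walk_rev[of "u # a"]
    by simp_all
  ultimately have "tpath P E x v (rev a @ u # b)"
    using a_props b_props assms(1) successively_append_Cons[of _ "rev a" u b]
    by (auto simp: tpath_iff hd_rev)
  then have "tree_path x v = rev a @ u # b" by (rule tree_path_eqI)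
  then show ?thesis
    using A B tree_path_sym[OF assms(1,2)] assms(1-3)
    by (simp add: tdist_eq chain_sum_append[of _ "rev a" u b])
qed

lemma next_hops_differ_on_path:
  assumes "x \<in> P" "v \<in> P" "y \<in> set (tree_path x v)" "y \<noteq> x" "y \<noteq> v"
  shows "next_hop y x \<noteq> next_hop y v"
proof -
  have "y \<in> P" using tree_path_props(5)[OF assms(1,2)] assms(3) by auto
  obtain p q where pq: "tree_path x v = p @ y # q" "tree_path x y = p @ [y]" "tree_path y v = y # q"
    using tree_path_split[OF assms(1-3)] by blast
  have "q \<noteq> []" using tree_path_props(3)[OF assms(1,2)] pq(1) assms(5) by auto
  moreover have "p \<noteq> []" using tree_path_props(2)[OF assms(1,2)] pq(1) assms(4) by auto
  moreover have "next_hop y v = hd q" unfolding next_hop_def using pq(3) by simp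
  moreover have "next_hop y x = last p"
    unfolding next_hop_def using tree_path_sym[OF assms(1) \<open>y \<in> P\<close>] pq(2) \<open>p \<noteq> []\<close>
    by (simp add: hd_rev)
  moreover have "distinct (p @ y # q)" using tree_path_props(4)[OF assms(1,2)] pq(1) by simp
  ultimately show ?thesis
    by (metis disjoint_iff distinct_append hd_in_set last_in_set list.set_intros(2))
qed

end

section \<open>Greedy routing in a tree metric\<close>

locale finite_weighted_tree = weighted_tree +
  assumes finite_points: "finite P"
begin

lemma greedy_len_ge_tdist:
  assumes "greedy_path tdist s x v xs" "valid_profile P s" "x \<in> P" "v \<in> P"
  shows "greedy_len tdist xs \<ge> tdist x v"
  using assms
proof (induction xs arbitrary: x)
  case (Cons x' xs)
  then have "x' = x" by (simp add: greedy_path_iff)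
  show ?case
  proof (cases xs)
    case Nil
    then have "x = v" using Cons.prems(1) \<open>x' = x\<close> greedy_path_single by metis
    then show ?thesis using \<open>x' = x\<close> Nil tdist_self Cons.prems(4) by (simp add: greedy_len_single)
  next
    case (Cons y ys)
    then have y: "y \<in> s x" "greedy_path tdist s y v (y # ys)"
      using Cons.prems(1) \<open>x' = x\<close> greedy_path_Cons_Cons by metis+
    have "y \<in> P" using y(1) Cons.prems(2,3) unfolding valid_profile_def by blast
    then have "greedy_len tdist (y # ys) \<ge> tdist y v" using Cons.IH y(2) Cons.prems(2,4) Cons by blast
    moreover have "tdist x v \<le> tdist x y + tdist y v"
      using tdist_triangle Cons.prems(3,4) \<open>y \<in> P\<close> by blast
    ultimately show ?thesis using \<open>x' = x\<close> Cons by (simp add: greedy_len_Cons_Cons)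
  qed
qed (simp add: greedy_path_iff)

lemma stretch_ge_one:
  assumes "valid_profile P s" "u \<in> P" "v \<in> P" "u \<noteq> v" "1 \<le> Z"
  shows "1 \<le> stretch tdist Z s u v"
proof (cases "\<exists>xs. greedy_path tdist s u v xs")
  case True
  then obtain ys where "greedy_path tdist s u v ys" "stretch tdist Z s u v = greedy_len tdist ys / tdist u v"
    using stretch_attained[OF finite_points assms(1,2)] by metis
  then show ?thesis using greedy_len_ge_tdist assms tdist_pos[OF assms(2-4)] by simp
qed (simp add: stretch_unreachable assms(5))

lemma stretch_gt_one:
  assumes "valid_profile P s" "u \<in> P" "v \<in> P" "u \<noteq> v" "1 < Z"
    and longer: "\<And>xs. greedy_path tdist s u v xs \<Longrightarrow> greedy_len tdist xs > tdist u v"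
  shows "1 < stretch tdist Z s u v"
proof (cases "\<exists>xs. greedy_path tdist s u v xs")
  case True
  then obtain ys where "greedy_path tdist s u v ys" "stretch tdist Z s u v = greedy_len tdist ys / tdist u v"
    using stretch_attained[OF finite_points assms(1,2)] by metis
  then show ?thesis using longer tdist_pos[OF assms(2-4)] by simp
qed (simp add: stretch_unreachable assms(5))

lemma stretch_eq_one:
  assumes "valid_profile P s" "u \<in> P" "v \<in> P" "u \<noteq> v"
    and "greedy_path tdist s u v xs" "greedy_len tdist xs = tdist u v"
  shows "stretch tdist Z s u v = 1"
proof -
  obtain ys where ys: "greedy_path tdist s u v ys" "stretch tdist Z s u v = greedy_len tdist ys / tdist u v"
    "greedy_len tdist ys \<le> greedy_len tdist xs"
    using stretch_attained[OF finite_points assms(1,2,5)] assms(5) by metis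
  then have "greedy_len tdist ys = tdist u v"
    using greedy_len_ge_tdist[OF ys(1) assms(1-3)] assms(6) by simp
  then show ?thesis using ys(2) tdist_pos[OF assms(2-4)] by simp
qed

definition branch :: "'a \<Rightarrow> 'a \<Rightarrow> 'a set" where
  "branch u n = {v \<in> P. v \<noteq> u \<and> next_hop u v = n}"

definition nbrs :: "'a \<Rightarrow> 'a set" where
  "nbrs u = {n. {u, n} \<in> E}"

definition tree_routed :: "('a \<Rightarrow> 'a set) \<Rightarrow> 'a \<Rightarrow> 'a \<Rightarrow> bool" where
  "tree_routed s x v \<longleftrightarrow> (\<forall>y\<in>set (tree_path x v). y \<noteq> v \<longrightarrow> next_hop y v \<in> s y)"

lemma next_hop_nbrs: "y \<in> P \<Longrightarrow> v \<in> P \<Longrightarrow> y \<noteq> v \<Longrightarrow> next_hop y v \<in> nbrs y"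
  using tree_path_next_hop(2) by (simp add: nbrs_def)

lemma tree_routed_greedy_path:
  assumes "x \<in> P" "v \<in> P" "tree_routed s x v"
  shows "\<exists>xs. greedy_path tdist s x v xs \<and> greedy_len tdist xs = tdist x v"
  using assms
proof (induction "length (tree_path x v)" arbitrary: x rule: less_induct)
  case less
  show ?case
  proof (cases "x = v")
    case True
    then show ?thesis
      using tdist_self[OF less.prems(2)] greedy_path_single greedy_len_single by metis
  next
    case False
    let ?n = "next_hop x v"
    note hop = tree_path_next_hop[OF less.prems(1,2) False]
    have "tree_routed s ?n v" "?n \<in> s x"
      using less.prems(3) hop(1) False unfolding tree_routed_def by simp_all
    then obtain xs where xs: "greedy_path tdist s ?n v xs" "greedy_len tdist xs = tdist ?n v"
      using less.hyps hop less.prems(2) by fastforce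
    obtain ys where ys: "xs = ?n # ys" using greedy_path_ConsE[OF xs(1)] .
    have "tdist x ?n > 0" using tdist_edge[OF hop(2)] weight_pos[OF hop(2)] by simp
    then have "greedy_path tdist s x v (x # xs)" "greedy_len tdist (x # xs) = tdist x v"
      using xs ys \<open>?n \<in> s x\<close> tdist_next_hop[OF less.prems(1,2) False]
      by (simp_all add: greedy_path_Cons_Cons greedy_len_Cons_Cons)
    then show ?thesis by blast
  qed
qed

lemma branch_path_props:
  assumes "u \<in> P" "{u, n} \<in> E" "v \<in> branch u n" "y \<in> set (tree_path n v)"
  shows "v \<in> P" "v \<noteq> u" "n \<in> P" "y \<in> P" "y \<noteq> u"
    "tree_path u v = u # tree_path n v" "y \<in> set (tree_path u v)"
proof -
  show v: "v \<in> P" "v \<noteq> u" using assms(3) unfolding branch_def by auto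
  show n: "n \<in> P" using edge_endpoints assms(2) by auto
  show path: "tree_path u v = u # tree_path n v"
    using tree_path_next_hop(1)[OF assms(1) v(1) v(2)[symmetric]] assms(3) by (simp add: branch_def)
  show "y \<in> P" using tree_path_props(5)[OF n v(1)] assms(4) by auto
  show "y \<noteq> u" using tree_path_props(4)[OF assms(1) v(1)] path assms(4) by auto
  show "y \<in> set (tree_path u v)" using path assms(4) by simp
qed

text \<open>A first hop y in another branch has its tree path to v running through u, so it is not
  closer to v than u.\<close>
lemma greedy_path_first_hop:
  assumes s: "valid_profile P s" and u: "u \<in> P" "A \<subseteq> P - {u}" and v: "v \<in> P" "v \<noteq> u"
    and path: "greedy_path tdist (s(u := A)) u v xs"
  obtains y ys where "xs = u # y # ys" "y \<in> A" "y \<in> branch u (next_hop u v)"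
    "tdist y v < tdist u v" "greedy_path tdist s y v (y # ys)"
proof -
  obtain t where t: "xs = u # t" using greedy_path_ConsE[OF path] .
  then obtain y ys where t': "t = y # ys" using path v(2) by (cases t) (auto simp: greedy_path_single)
  have "greedy_path tdist (s(u := A)) u v (u # y # ys)" using path t t' by simp
  then have y: "y \<in> A" "tdist y v < tdist u v" "greedy_path tdist (s(u := A)) y v (y # ys)"
    by (simp_all add: greedy_path_Cons_Cons)
  have "y \<in> P" "y \<noteq> u" using y(1) u(2) by auto
  have "\<forall>z\<in>set (y # ys). tdist z v \<le> tdist y v"
    using greedy_path_props[OF y(3) valid_profile_fun_upd[OF s u] \<open>y \<in> P\<close>] by blast
  then have "u \<notin> set (y # ys)" using y(2) by force
  then have "greedy_path tdist s y v (y # ys)" using y(3) by (simp add: greedy_path_fun_upd)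
  moreover have "next_hop u y = next_hop u v"
  proof (rule ccontr)
    assume "next_hop u y \<noteq> next_hop u v"
    then have "tdist y v = tdist y u + tdist u v" by (rule tdist_through[OF u(1) \<open>y \<in> P\<close> v(1) \<open>y \<noteq> u\<close> v(2)])
    then show False using y(2) tdist_nonneg[OF \<open>y \<in> P\<close> u(1)] by simp
  qed
  ultimately show ?thesis
    using that t t' y(1,2) \<open>y \<in> P\<close> \<open>y \<noteq> u\<close> by (simp add: branch_def)
qed

lemma greedy_path_via_first_hop:
  assumes "valid_profile P s" "u \<in> P" "y \<in> A" "y \<in> P" "tdist y v < tdist u v"
    and path: "greedy_path tdist s y v (y # ys)"
  shows "greedy_path tdist (s(u := A)) u v (u # y # ys)"
proof -
  have "\<forall>z\<in>set (y # ys). tdist z v \<le> tdist y v" using greedy_path_props[OF path assms(1,4)] by blast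
  then have "u \<notin> set (y # ys)" using assms(5) by force
  then show ?thesis using path assms(3,5) by (simp add: greedy_path_Cons_Cons greedy_path_fun_upd)
qed

lemma stretch_branch_cong:
  assumes s: "valid_profile P s" and u: "u \<in> P" "A \<subseteq> P - {u}" "B \<subseteq> P - {u}" and v: "v \<in> P" "v \<noteq> u"
    and AB: "A \<inter> branch u (next_hop u v) = B \<inter> branch u (next_hop u v)"
  shows "stretch tdist Z (s(u := A)) u v = stretch tdist Z (s(u := B)) u v"
proof -
  have transfer: "greedy_path tdist (s(u := B')) u v xs"
    if A': "A' \<subseteq> P - {u}" "A' \<inter> branch u (next_hop u v) = B' \<inter> branch u (next_hop u v)"
      "greedy_path tdist (s(u := A')) u v xs"
    for A' B' xs
  proof -
    obtain y ys where y: "xs = u # y # ys" "y \<in> A'" "y \<in> branch u (next_hop u v)"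
      "tdist y v < tdist u v" "greedy_path tdist s y v (y # ys)"
      using greedy_path_first_hop[OF s u(1) A'(1) v A'(3)] by metis
    have "y \<in> B'" "y \<in> P" using y(2,3) A'(2) unfolding branch_def by blast+
    then show ?thesis using greedy_path_via_first_hop[OF s u(1) _ _ y(4,5)] y(1) by simp
  qed
  have "greedy_path tdist (s(u := A)) u v xs \<longleftrightarrow> greedy_path tdist (s(u := B)) u v xs" for xs
    using transfer[OF u(2) AB, of xs] transfer[OF u(3) AB[symmetric], of xs] by blast
  then have "greedy_path tdist (s(u := A)) u v = greedy_path tdist (s(u := B)) u v" by (rule ext)
  then show ?thesis unfolding stretch_def by (simp only:)
qed

definition children :: "'a \<Rightarrow> 'a \<Rightarrow> 'a set" where
  "children r y = {m \<in> nbrs y. y = r \<or> m \<noteq> next_hop y r}"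

lemma children_subset_nbrs: "children r y \<subseteq> nbrs y"
  by (auto simp: children_def)

text \<open>Below the child n of u (rooting the tree at r) the points r, u, y, v lie on one geodesic, so y is
  farther from r than u and routing from y to v continues downwards.\<close>
lemma branch_below_child:
  assumes r: "r \<in> P" and u: "u \<in> P" "n \<in> children r u"
    and v: "v \<in> branch u n" and y: "y \<in> set (tree_path n v)" "y \<noteq> v"
  shows "tdist r y > tdist r u" "next_hop y v \<in> children r y"
proof -
  have un: "{u, n} \<in> E" using u(2) by (simp add: children_def nbrs_def)
  note path = branch_path_props[OF u(1) un v y(1)]
  have r_u_v: "tdist r v = tdist r u + tdist u v"
  proof (cases "u = r")
    case False
    then have "next_hop u r \<noteq> next_hop u v" using u(2) v by (auto simp: children_def branch_def)
    then show ?thesis using tdist_through[OF u(1) r path(1) _ path(2)] False by metis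
  qed (simp add: tdist_self r)
  have u_y_v: "tdist u v = tdist u y + tdist y v" using tdist_split[OF u(1) path(1) path(7)] .
  have r_u_y: "tdist r y = tdist r u + tdist u y"
    using r_u_v u_y_v tdist_triangle[OF r path(4) path(1)] tdist_triangle[OF r u(1) path(4)] by linarith
  then show far: "tdist r y > tdist r u" using tdist_pos[OF u(1) path(4) path(5)[symmetric]] by simp
  then have "y \<noteq> r" using tdist_self[OF r] tdist_nonneg[OF r u(1)] by auto
  let ?m = "next_hop y v"
  note hop = tree_path_next_hop[OF path(4) path(1) y(2)]
  have "?m \<noteq> next_hop y r"
  proof
    assume "?m = next_hop y r"
    then have "tdist y r = tdist y ?m + tdist ?m r"
      using tdist_next_hop[OF path(4) r \<open>y \<noteq> r\<close>] by simp
    moreover have "tdist y v = tdist y ?m + tdist ?m v" using tdist_next_hop[OF path(4) path(1) y(2)] .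
    moreover have "tdist y ?m > 0" using tdist_edge[OF hop(2)] weight_pos[OF hop(2)] by simp
    moreover have "tdist r v \<le> tdist r ?m + tdist ?m v" using tdist_triangle[OF r hop(3) path(1)] .
    ultimately show False
      using r_u_v u_y_v r_u_y tdist_sym[OF r hop(3)] tdist_sym[OF r path(4)] by linarith
  qed
  then show "?m \<in> children r y" using hop(2) by (simp add: children_def nbrs_def)
qed

lemma parent_hop_closer:
  assumes r: "r \<in> P" and u: "u \<in> P" "n \<in> nbrs u" and v: "v \<in> branch u n"
    and y: "y \<in> set (tree_path n v)" "y \<noteq> v" "y \<noteq> r" "next_hop y v = next_hop y r"
  shows "tdist r y < tdist r u"
proof -
  have un: "{u, n} \<in> E" using u(2) by (simp add: nbrs_def)
  note path = branch_path_props[OF u(1) un v y(1)]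
  have "next_hop y u \<noteq> next_hop y r"
    using next_hops_differ_on_path[OF u(1) path(1) path(7) path(5) y(2)] y(4) by simp
  then have "tdist u r = tdist u y + tdist y r"
    using tdist_through[OF path(4) u(1) r path(5)[symmetric] y(3)[symmetric]] by simp
  moreover have "tdist u y > 0" using tdist_pos[OF u(1) path(4) path(5)[symmetric]] .
  ultimately show ?thesis using tdist_sym[OF r path(4)] tdist_sym[OF r u(1)] by simp
qed

lemma stretch_empty_branch:
  assumes "valid_profile P s" "u \<in> P" "S \<subseteq> P - {u}" "v \<in> P" "v \<noteq> u"
    and "S \<inter> branch u (next_hop u v) = {}"
  shows "stretch tdist Z (s(u := S)) u v = Z"
proof (rule stretch_unreachable, rule notI, elim exE)
  fix xs assume "greedy_path tdist (s(u := S)) u v xs"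
  then obtain y where "y \<in> S" "y \<in> branch u (next_hop u v)"
    using greedy_path_first_hop[OF assms(1-5)] by metis
  then show False using assms(6) by blast
qed

text \<open>Without the direct link to the neighbour n, every greedy path to n detours through a point
  strictly behind n.\<close>
lemma stretch_neighbour_gt_one:
  assumes s: "valid_profile P s" and u: "u \<in> P" "S \<subseteq> P - {u}" and n: "{u, n} \<in> E" "n \<notin> S"
    and "1 < Z"
  shows "1 < stretch tdist Z (s(u := S)) u n"
proof -
  have "n \<in> P" "n \<noteq> u" using edge_endpoints[OF n(1)] by auto
  show ?thesis
  proof (rule stretch_gt_one[OF valid_profile_fun_upd[OF s u] u(1) \<open>n \<in> P\<close> \<open>n \<noteq> u\<close>[symmetric] \<open>1 < Z\<close>])
    fix xs assume path: "greedy_path tdist (s(u := S)) u n xs"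
    obtain y ys where y: "xs = u # y # ys" "y \<in> S" "y \<in> branch u n" "greedy_path tdist s y n (y # ys)"
      using greedy_path_first_hop[OF s u \<open>n \<in> P\<close> \<open>n \<noteq> u\<close> path] next_hop_edge[OF n(1)] by metis
    have "y \<in> P" "y \<noteq> u" "y \<noteq> n" using y(2,3) n(2) by (auto simp: branch_def)
    have "tdist u y = tdist u n + tdist n y"
      using tdist_next_hop[OF u(1) \<open>y \<in> P\<close> \<open>y \<noteq> u\<close>[symmetric]] y(3) by (simp add: branch_def)
    moreover have "tdist n y > 0" using tdist_pos[OF \<open>n \<in> P\<close> \<open>y \<in> P\<close>] \<open>y \<noteq> n\<close> by simp
    moreover have "greedy_len tdist (y # ys) \<ge> tdist y n"
      using greedy_len_ge_tdist[OF y(4) s \<open>y \<in> P\<close> \<open>n \<in> P\<close>] .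
    ultimately show "tdist u n < greedy_len tdist xs"
      using y(1) tdist_sym[OF \<open>y \<in> P\<close> \<open>n \<in> P\<close>] by (simp add: greedy_len_Cons_Cons)
  qed
qed

lemma stretch_branch_eq_one:
  assumes s: "valid_profile P s" and u: "u \<in> P" "A \<subseteq> P - {u}" "n \<in> A" and n: "{u, n} \<in> E"
    and v: "v \<in> branch u n" "tree_routed s n v"
  shows "stretch tdist Z (s(u := A)) u v = 1"
proof -
  have nP: "n \<in> P" "n \<noteq> u" using edge_endpoints[OF n] by auto
  have vP: "v \<in> P" "v \<noteq> u" "next_hop u v = n" using v(1) by (auto simp: branch_def)
  obtain xs where xs: "greedy_path tdist s n v xs" "greedy_len tdist xs = tdist n v"
    using tree_routed_greedy_path[OF nP(1) vP(1) v(2)] by blast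
  obtain ys where ys: "xs = n # ys" using greedy_path_ConsE[OF xs(1)] .
  have duv: "tdist u v = tdist u n + tdist n v"
    using tdist_next_hop[OF u(1) vP(1) vP(2)[symmetric]] vP(3) by simp
  moreover have "tdist u n > 0" using tdist_pos[OF u(1) nP(1) nP(2)[symmetric]] .
  ultimately have "greedy_path tdist (s(u := A)) u v (u # xs)"
    using greedy_path_via_first_hop[OF s u(1) u(3) nP(1) _ xs(1)[unfolded ys]] ys by simp
  moreover have "greedy_len tdist (u # xs) = tdist u v"
    using xs(2) ys duv by (simp add: greedy_len_Cons_Cons)
  ultimately show ?thesis
    by (rule stretch_eq_one[OF valid_profile_fun_upd[OF s u(1,2)] u(1) vP(1) vP(2)[symmetric]])
qed

end

section \<open>Best responses and the best-response dynamics\<close>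

locale network_game = finite_weighted_tree +
  fixes \<alpha> Z :: real
  assumes price_pos: "\<alpha> > 0" and penalty_large: "Z > 1 + \<alpha>"
begin

lemma best_response_exists: "u \<in> P \<Longrightarrow> \<exists>S. best_response P tdist \<alpha> Z s u S"
proof -
  define c where "c S = cost P tdist \<alpha> Z (s(u := S)) u" for S
  have fin: "finite (c ` Pow (P - {u}))" using finite_points by simp
  have "c ` Pow (P - {u}) \<noteq> {}" by blast
  with fin have "Min (c ` Pow (P - {u})) \<in> c ` Pow (P - {u})" by (rule Min_in)
  then obtain S where S: "S \<in> Pow (P - {u})" "c S = Min (c ` Pow (P - {u}))" by (metis imageE)
  have "c S \<le> c S'" if "S' \<subseteq> P - {u}" for S'
    using Min_le[OF fin] that S(2) by simp
  then show ?thesis using S(1) unfolding best_response_def c_def by blast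
qed

text \<open>Compare S with the deviation that replaces S \<inter> branch u n by the single link to n: when the
  tree paths inside the branch are present, that link gives stretch 1 to the whole branch.\<close>
lemma best_response_branch_bound:
  assumes s: "valid_profile P s" and u: "u \<in> P" and n: "{u, n} \<in> E"
    and routed: "\<forall>v\<in>branch u n. tree_routed s n v" and br: "best_response P tdist \<alpha> Z s u S"
  shows "(\<Sum>v\<in>branch u n. stretch tdist Z (s(u := S)) u v) + \<alpha> * card (S \<inter> branch u n)
    \<le> card (branch u n) + \<alpha>"
proof -
  define K where "K = branch u n"
  define S' where "S' = insert n (S - K)"
  define f where "f A v = stretch tdist Z (s(u := A)) u v" for A v
  have SP: "S \<subseteq> P - {u}" using br by (simp add: best_response_def)
  have nP: "n \<in> P" "n \<noteq> u" using edge_endpoints[OF n] by auto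
  have KP: "K \<subseteq> P - {u}" by (auto simp: K_def branch_def)
  have nK: "n \<in> K" using nP next_hop_edge[OF n] by (simp add: K_def branch_def)
  have S'P: "S' \<subseteq> P - {u}" using SP nP by (auto simp: S'_def)
  have split: "cost P tdist \<alpha> Z (s(u := A)) u
      = (\<Sum>v\<in>K. f A v) + (\<Sum>v\<in>(P - {u}) - K. f A v) + \<alpha> * card A" for A
    using sum.subset_diff[OF KP, of "f A"] finite_points by (simp add: cost_def f_def)
  have outside: "(\<Sum>v\<in>(P - {u}) - K. f S v) = (\<Sum>v\<in>(P - {u}) - K. f S' v)"
  proof (rule sum.cong)
    fix v assume v: "v \<in> (P - {u}) - K"
    then have "S \<inter> branch u (next_hop u v) = S' \<inter> branch u (next_hop u v)"
      using nK by (auto simp: S'_def K_def branch_def)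
    then show "f S v = f S' v" using stretch_branch_cong[OF s u SP S'P] v by (simp add: f_def)
  qed simp
  have "f S' v = 1" if "v \<in> K" for v
    using stretch_branch_eq_one[OF s u S'P _ n] routed that by (simp add: f_def S'_def K_def)
  then have "(\<Sum>v\<in>K. f S' v) = card K" by simp
  moreover have "finite S" using finite_subset[OF SP] finite_points by blast
  then have "card S = card (S \<inter> K) + card (S - K)" "card S' = card (S - K) + 1"
    using nK card_Int_Diff[of S K] by (simp_all add: S'_def)
  moreover have "cost P tdist \<alpha> Z (s(u := S)) u \<le> cost P tdist \<alpha> Z (s(u := S')) u"
    using br S'P by (simp add: best_response_def)
  ultimately have "(\<Sum>v\<in>K. f S v) + \<alpha> * card (S \<inter> K) \<le> card K + \<alpha>"
    using split[of S] split[of S'] outside by (simp add: algebra_simps)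
  then show ?thesis by (simp add: K_def f_def)
qed

lemma best_response_inter_branch:
  assumes s: "valid_profile P s" and u: "u \<in> P" and n: "{u, n} \<in> E"
    and routed: "\<forall>v\<in>branch u n. tree_routed s n v" and br: "best_response P tdist \<alpha> Z s u S"
  shows "S \<inter> branch u n = {n}"
proof (rule ccontr)
  assume ne: "S \<inter> branch u n \<noteq> {n}"
  define K where "K = branch u n"
  define f where "f v = stretch tdist Z (s(u := S)) u v" for v
  have SP: "S \<subseteq> P - {u}" using br by (simp add: best_response_def)
  have nP: "n \<in> P" "n \<noteq> u" using edge_endpoints[OF n] by auto
  have nK: "n \<in> K" using nP next_hop_edge[OF n] by (simp add: K_def branch_def)
  have "finite K" using finite_points by (simp add: K_def branch_def)
  have ge_one: "1 \<le> f v" if vK: "v \<in> K" for v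
  proof -
    have "v \<in> P" "u \<noteq> v" using vK by (auto simp: K_def branch_def)
    then show ?thesis unfolding f_def
      using stretch_ge_one[OF valid_profile_fun_upd[OF s u SP] u] penalty_large price_pos by simp
  qed
  have sum_ge: "f n + (real (card K) - 1) \<le> sum f K"
    using sum_ge_term_plus_card[OF \<open>finite K\<close> nK ge_one] .
  have bound: "sum f K + \<alpha> * card (S \<inter> K) \<le> card K + \<alpha>"
    using best_response_branch_bound[OF s u n routed br] by (simp add: K_def f_def)
  consider "n \<in> S" | "n \<notin> S" "S \<inter> K = {}" | "n \<notin> S" "S \<inter> K \<noteq> {}" by blast
  then show False
  proof cases
    case 1
    then obtain x where "x \<in> S \<inter> K" "x \<noteq> n" using ne nK by (auto simp: K_def)
    then have "card {n, x} \<le> card (S \<inter> K)" using 1 nK \<open>finite K\<close> by (intro card_mono) auto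
    then have "2 \<le> card (S \<inter> K)" using \<open>x \<noteq> n\<close> by simp
    then have "\<alpha> * 2 \<le> \<alpha> * card (S \<inter> K)" using price_pos by simp
    then show False using sum_ge bound ge_one[OF nK] price_pos by linarith
  next
    case 2
    then have "f n = Z"
      using stretch_empty_branch[OF s u SP nP(1) nP(2)] next_hop_edge[OF n] by (simp add: f_def K_def)
    then show False using sum_ge bound penalty_large 2 by simp
  next
    case 3
    then have "1 \<le> card (S \<inter> K)" using \<open>finite K\<close> by (simp add: Suc_le_eq card_gt_0_iff)
    then have "\<alpha> \<le> \<alpha> * card (S \<inter> K)" using price_pos by simp
    moreover have "1 < f n"
      using stretch_neighbour_gt_one[OF s u SP n 3(1)] penalty_large price_pos by (simp add: f_def)
    ultimately show False using sum_ge bound by linarith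
  qed
qed

lemma best_response_eq_nbrs:
  assumes s: "valid_profile P s" and u: "u \<in> P"
    and routed: "\<forall>n\<in>nbrs u. \<forall>v\<in>branch u n. tree_routed s n v"
    and br: "best_response P tdist \<alpha> Z s u S"
  shows "S = nbrs u"
proof
  show "nbrs u \<subseteq> S"
    using best_response_inter_branch[OF s u _ _ br] routed by (auto simp: nbrs_def)
  show "S \<subseteq> nbrs u"
  proof
    fix x assume "x \<in> S"
    then have x: "x \<in> P" "x \<noteq> u" using br by (auto simp: best_response_def)
    let ?n = "next_hop u x"
    have "?n \<in> nbrs u" using next_hop_nbrs[OF u x(1) x(2)[symmetric]] .
    then have "S \<inter> branch u ?n = {?n}"
      using best_response_inter_branch[OF s u _ _ br] routed by (simp add: nbrs_def)
    moreover have "x \<in> branch u ?n" using x by (simp add: branch_def)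
    ultimately have "x = ?n" using \<open>x \<in> S\<close> by blast
    then show "x \<in> nbrs u" using \<open>?n \<in> nbrs u\<close> by simp
  qed
qed

abbreviation br_steps :: "('a \<Rightarrow> 'a set) \<Rightarrow> ('a \<Rightarrow> 'a set) \<Rightarrow> bool" where
  "br_steps \<equiv> (br_step P tdist \<alpha> Z)\<^sup>*\<^sup>*"

lemma best_response_step:
  assumes "valid_profile P s" "u \<in> P" "best_response P tdist \<alpha> Z s u S"
  shows "br_step P tdist \<alpha> Z s (s(u := S))" "valid_profile P (s(u := S))"
proof -
  show "br_step P tdist \<alpha> Z s (s(u := S))" unfolding br_step_def using assms(2,3) by blast
  show "valid_profile P (s(u := S))"
    using valid_profile_fun_upd[OF assms(1,2)] assms(3) by (simp add: best_response_def)
qed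

text \<open>Agents best-respond in order of decreasing distance from the root r; afterwards every agent
  links to all its children, because the tree paths below a child are then already present.\<close>
lemma children_phase:
  assumes r: "r \<in> P" and L: "set L = P" "sorted (map (\<lambda>x. - tdist r x) L)"
    and s: "valid_profile P s"
  shows "k \<le> length L \<Longrightarrow>
    \<exists>s'. br_steps s s' \<and> valid_profile P s' \<and> (\<forall>y\<in>set (take k L). children r y \<subseteq> s' y)"
proof (induction k)
  case 0
  then show ?case using s by auto
next
  case (Suc k)
  then obtain s' where s': "br_steps s s'" "valid_profile P s'" "\<forall>y\<in>set (take k L). children r y \<subseteq> s' y"
    by auto
  have k: "k < length L" using Suc.prems by simp
  define u where "u = L ! k"
  have u: "u \<in> P" using k L(1) u_def by auto
  obtain S where br: "best_response P tdist \<alpha> Z s' u S" using best_response_exists[OF u] by blast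
  have children_S: "n \<in> S" if n: "n \<in> children r u" for n
  proof -
    have un: "{u, n} \<in> E" using n by (simp add: children_def nbrs_def)
    have "tree_routed s' n v" if v: "v \<in> branch u n" for v
      unfolding tree_routed_def
    proof (intro ballI impI)
      fix y assume y: "y \<in> set (tree_path n v)" "y \<noteq> v"
      note below = branch_below_child[OF r u n v y]
      have "y \<in> set (take k L)"
        using mem_take_if_sorted_less[OF L(2), of y k] branch_path_props(4)[OF u un v y(1)] L(1) k below(1)
        by (simp add: u_def)
      then show "next_hop y v \<in> s' y" using s'(3) below(2) by blast
    qed
    then show ?thesis using best_response_inter_branch[OF s'(2) u un _ br] by blast
  qed
  have "\<forall>y\<in>set (take (Suc k) L). children r y \<subseteq> (s'(u := S)) y"
    using s'(3) children_S k by (auto simp: u_def take_Suc_conv_app_nth)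
  moreover note step = best_response_step[OF s'(2) u br]
  moreover have "br_steps s (s'(u := S))" using s'(1) step(1) by simp
  ultimately show ?case by blast
qed

text \<open>Agents then best-respond in order of increasing distance from r and settle on all their
  neighbours: towards a child the tree path is present by the first phase, towards the parent it
  runs through agents that have already settled.\<close>
lemma nbrs_phase:
  assumes r: "r \<in> P" and L: "set L = P" "sorted (map (\<lambda>x. tdist r x) L)"
    and s: "valid_profile P s" "\<forall>y\<in>P. children r y \<subseteq> s y"
  shows "k \<le> length L \<Longrightarrow> \<exists>s'. br_steps s s' \<and> valid_profile P s' \<and>
    (\<forall>y\<in>P. children r y \<subseteq> s' y) \<and> (\<forall>y\<in>set (take k L). s' y = nbrs y)"
proof (induction k)
  case 0
  then show ?case using s by auto
next
  case (Suc k)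
  then obtain s' where s': "br_steps s s'" "valid_profile P s'" "\<forall>y\<in>P. children r y \<subseteq> s' y"
    "\<forall>y\<in>set (take k L). s' y = nbrs y" by auto
  have k: "k < length L" using Suc.prems by simp
  define u where "u = L ! k"
  have u: "u \<in> P" using k L(1) u_def by auto
  obtain S where br: "best_response P tdist \<alpha> Z s' u S" using best_response_exists[OF u] by blast
  have "tree_routed s' n v" if n: "n \<in> nbrs u" and v: "v \<in> branch u n" for n v
    unfolding tree_routed_def
  proof (intro ballI impI)
    fix y assume y: "y \<in> set (tree_path n v)" "y \<noteq> v"
    have un: "{u, n} \<in> E" using n by (simp add: nbrs_def)
    note path = branch_path_props[OF u un v y(1)]
    have hop: "next_hop y v \<in> nbrs y" using next_hop_nbrs[OF path(4,1) y(2)] .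
    show "next_hop y v \<in> s' y"
    proof (cases "y = r \<or> next_hop y v \<noteq> next_hop y r")
      case True
      then have "next_hop y v \<in> children r y" using hop by (auto simp: children_def)
      then show ?thesis using s'(3) path(4) by blast
    next
      case False
      then have "tdist r y < tdist r u" using parent_hop_closer[OF r u n v y] by simp
      then have "y \<in> set (take k L)"
        using mem_take_if_sorted_less[OF L(2), of y k] path(4) L(1) k by (simp add: u_def)
      then show ?thesis using hop s'(4) by simp
    qed
  qed
  then have "S = nbrs u" using best_response_eq_nbrs[OF s'(2) u _ br] by simp
  then have "\<forall>y\<in>P. children r y \<subseteq> (s'(u := S)) y"
    using s'(3) children_subset_nbrs by simp
  moreover have "\<forall>y\<in>set (take (Suc k) L). (s'(u := S)) y = nbrs y"
    using s'(4) k \<open>S = nbrs u\<close> by (simp add: u_def take_Suc_conv_app_nth)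
  moreover note step = best_response_step[OF s'(2) u br]
  moreover have "br_steps s (s'(u := S))" using s'(1) step(1) by simp
  ultimately show ?case by blast
qed

lemma nbrs_profile_nash:
  assumes s: "valid_profile P s" and nbrs: "\<forall>y\<in>P. s y = nbrs y"
  shows "nash_equilibrium P tdist \<alpha> Z s"
  unfolding nash_equilibrium_def
proof (intro conjI ballI s)
  fix u assume u: "u \<in> P"
  obtain S where br: "best_response P tdist \<alpha> Z s u S" using best_response_exists[OF u] by blast
  have "tree_routed s n v" if "n \<in> nbrs u" "v \<in> branch u n" for n v
    using branch_path_props[OF u _ that(2)] that(1) nbrs next_hop_nbrs
    by (auto simp: tree_routed_def nbrs_def)
  then have "S = s u" using best_response_eq_nbrs[OF s u _ br] nbrs u by simp
  then show "best_response P tdist \<alpha> Z s u (s u)" using br by simp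
qed

lemma weakly_acyclic: "weakly_acyclic_br P tdist \<alpha> Z"
  unfolding weakly_acyclic_br_def
proof (intro allI impI)
  fix s assume s: "valid_profile P s"
  have "\<exists>s'. br_steps s s' \<and> nash_equilibrium P tdist \<alpha> Z s'"
  proof (cases "P = {}")
    case True
    then show ?thesis using s by (auto simp: nash_equilibrium_def)
  next
    case False
    then obtain r where r: "r \<in> P" by blast
    obtain xs where xs: "set xs = P" using finite_list[OF finite_points] by blast
    define L1 where "L1 = sort_key (\<lambda>x. - tdist r x) xs"
    define L2 where "L2 = sort_key (\<lambda>x. tdist r x) xs"
    have L1: "set L1 = P" "sorted (map (\<lambda>x. - tdist r x) L1)" using xs by (simp_all add: L1_def)
    have L2: "set L2 = P" "sorted (map (\<lambda>x. tdist r x) L2)" using xs by (simp_all add: L2_def)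
    obtain s1 where s1: "br_steps s s1" "valid_profile P s1" "\<forall>y\<in>set L1. children r y \<subseteq> s1 y"
      using children_phase[OF r L1 s, of "length L1"] by auto
    obtain s2 where s2: "br_steps s1 s2" "valid_profile P s2" "\<forall>y\<in>set L2. s2 y = nbrs y"
      using nbrs_phase[OF r L2 s1(2), of "length L2"] s1(3) L1(1) by auto
    have "br_steps s s2" using s1(1) s2(1) by (rule rtranclp_trans)
    then show ?thesis using nbrs_profile_nash[OF s2(2)] s2(3) L2(1) by auto
  qed
  then obtain s' where "br_steps s s'" "nash_equilibrium P tdist \<alpha> Z s'" by blast
  moreover from this(1) obtain ss where "ss \<noteq> []" "hd ss = s" "last ss = s'"
    "\<forall>i < length ss - 1. br_step P tdist \<alpha> Z (ss ! i) (ss ! Suc i)"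
    using rtranclp_imp_chain by metis
  ultimately show "\<exists>ss. ss \<noteq> [] \<and> hd ss = s \<and> (\<forall>i < length ss - 1. br_step P tdist \<alpha> Z (ss ! i) (ss ! Suc i))
      \<and> nash_equilibrium P tdist \<alpha> Z (last ss)"
    by blast
qed

end

theorem theorem3p5:
  fixes P :: "'a set" and E :: "'a set set" and w :: "'a set \<Rightarrow> real" and \<alpha> :: real
  assumes "finite P"
    and "spanning_tree P E"
    and "\<forall>e\<in>E. w e > 0"
    and "\<alpha> > 0"
  shows "\<exists>Z0. \<forall>Z \<ge> Z0. weakly_acyclic_br P (tree_dist P E w) \<alpha> Z"
proof (intro exI[of _ "\<alpha> + 2"] allI impI)
  fix Z assume "\<alpha> + 2 \<le> Z"
  then interpret network_game P E w \<alpha> Z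
    using assms by unfold_locales auto
  show "weakly_acyclic_br P (tree_dist P E w) \<alpha> Z" by (rule weakly_acyclic)
qed

end
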